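(* Let $X$ be a Banach space, $B$ an admissible Banach sequence space over $\mathbb{Z}$, and $(A_n)_{n\in\mathbb{Z}}$ a sequence of invertible bounded linear operators on $X$ with $\sup_n\lVert A_n\rVert<\infty$ admitting an exponential dichotomy. Then the linear system $x_{n+1}=A_nx_n$, $n\in\mathbb{Z}$, has the $B$-Lipschitz shadowing property: there is $L>0$ such that for every $\varepsilon>0$ and every sequence $(y_n)_{n\in\mathbb{Z}}\subset X$ with $(y_{n+1}-A_ny_n)_{n\in\mathbb{Z}}\in X_B$ and $\lVert(y_{n+1}-A_ny_n)_{n\in\mathbb{Z}}\rVert_B\le L\varepsilon$, there exists $(x_n)_{n\in\mathbb{Z}}$ with $x_{n+1}=A_nx_n$ for all $n$, $(x_n-y_n)_{n\in\mathbb{Z}}\in X_B$ and $\lVert(x_n-y_n)_{n\in\mathbb{Z}}\rVert_B\le\varepsilon$. Furthermore, for each $\varepsilon>0$, the sequence $(x_n)_{n\in\mathbb{Z}}$ satisfying $x_{n+1}=A_nx_n$ for all $n$ and $\lVert(x_n-y_n)_{n\in\mathbb{Z}}\rVert_B\le\varepsilon$ is unique.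
   Context: A normed sequence space over $\mathbb{Z}$ is a linear subspace $B$ of the space of real sequences $\mathbf s=(s_n)_{n\in\mathbb{Z}}$ with a norm $\lVert\cdot\rVert_B$ such that if $\mathbf s'\in B$ and $|s_n|\le|s'_n|$ for all $n$ then $\mathbf s\in B$ and $\lVert\mathbf s\rVert_B\le\lVert\mathbf s'\rVert_B$; a Banach sequence space if complete. Admissible: each $\chi_{\{n\}}\in B$ with $\lVert\chi_{\{n\}}\rVert_B>0$, and $B$ is invariant under shifts $(s_n)\mapsto(s_{n+m})$ with equal norms; assume $\lVert\chi_{\{0\}}\rVert_B=1$. $X_B$ is the set of sequences $(x_n)\subset X$ with $(\lVert x_n\rVert)\in B$, normed by $\lVert\mathbf x\rVert_B=\lVert(\lVert x_n\rVert)_n\rVert_B$. Exponential dichotomy: with $\mathcal A(m,n)=A_{m-1}\cdots A_n$ ($m>n$), $\mathrm{Id}$ ($m=n$), $A_m^{-1}\cdots A_{n-1}^{-1}$ ($m<n$), there exist projections $P_m$ with $P_{m+1}A_m=A_mP_m$ and $C,\lambda>0$ with $\lVert\mathcal A(m,n)P_n\rVert\le Ce^{-\lambda(m-n)}$ ($m\ge n$) and $\lVert\mathcal A(m,n)(\mathrm{Id}-P_n)\rVert\le Ce^{-\lambda(n-m)}$ ($m\le n$). *)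

theory Defs
  imports "HOL-Analysis.Analysis"
begin

definition banach_seq_space :: "(int \<Rightarrow> real) set \<Rightarrow> ((int \<Rightarrow> real) \<Rightarrow> real) \<Rightarrow> bool" where
  "banach_seq_space B N \<longleftrightarrow>
     ((\<lambda>n. 0) \<in> B) \<and>
     (\<forall>s\<in>B. \<forall>t\<in>B. (\<lambda>n. s n + t n) \<in> B) \<and>
     (\<forall>s\<in>B. \<forall>c::real. (\<lambda>n. c * s n) \<in> B) \<and>
     (\<forall>s\<in>B. N s \<ge> 0) \<and>
     (\<forall>s\<in>B. N s = 0 \<longleftrightarrow> (\<forall>n. s n = 0)) \<and>
     (\<forall>s\<in>B. \<forall>c::real. N (\<lambda>n. c * s n) = \<bar>c\<bar> * N s) \<and>
     (\<forall>s\<in>B. \<forall>t\<in>B. N (\<lambda>n. s n + t n) \<le> N s + N t) \<and>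
     (\<forall>s s'. s' \<in> B \<and> (\<forall>n. \<bar>s n\<bar> \<le> \<bar>s' n\<bar>) \<longrightarrow> s \<in> B \<and> N s \<le> N s') \<and>
     (\<forall>f :: nat \<Rightarrow> int \<Rightarrow> real.
        (\<forall>k. f k \<in> B) \<and> (\<forall>e>0. \<exists>M. \<forall>m\<ge>M. \<forall>k\<ge>M. N (\<lambda>n. f m n - f k n) < e)
        \<longrightarrow> (\<exists>s\<in>B. (\<lambda>k. N (\<lambda>n. f k n - s n)) \<longlonglongrightarrow> 0))"

definition admissible :: "(int \<Rightarrow> real) set \<Rightarrow> ((int \<Rightarrow> real) \<Rightarrow> real) \<Rightarrow> bool" where
  "admissible B N \<longleftrightarrow>
     (\<forall>n. indicator {n} \<in> B \<and> N (indicator {n}) > 0) \<and>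
     (\<forall>s\<in>B. \<forall>m::int. (\<lambda>n. s (n + m)) \<in> B \<and> N (\<lambda>n. s (n + m)) = N s) \<and>
     N (indicator {0}) = 1"

definition in_XB :: "(int \<Rightarrow> real) set \<Rightarrow> (int \<Rightarrow> 'a::real_normed_vector) \<Rightarrow> bool" where
  "in_XB B x \<longleftrightarrow> (\<lambda>n. norm (x n)) \<in> B"

definition norm_XB :: "((int \<Rightarrow> real) \<Rightarrow> real) \<Rightarrow> (int \<Rightarrow> 'a::real_normed_vector) \<Rightarrow> real" where
  "norm_XB N x = N (\<lambda>n. norm (x n))"

definition invertible_op :: "('a::real_normed_vector \<Rightarrow>\<^sub>L 'a) \<Rightarrow> bool" where
  "invertible_op T \<longleftrightarrow> (\<exists>S. S o\<^sub>L T = id_blinfun \<and> T o\<^sub>L S = id_blinfun)"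

definition inv_op :: "('a::real_normed_vector \<Rightarrow>\<^sub>L 'a) \<Rightarrow> ('a \<Rightarrow>\<^sub>L 'a)" where
  "inv_op T = (SOME S. S o\<^sub>L T = id_blinfun \<and> T o\<^sub>L S = id_blinfun)"

text \<open>fwd A n k = A(n+k-1) ... A(n) ;  bwd A n k = A(n-k)^-1 ... A(n-1)^-1.\<close>

fun fwd :: "(int \<Rightarrow> ('a::real_normed_vector \<Rightarrow>\<^sub>L 'a)) \<Rightarrow> int \<Rightarrow> nat \<Rightarrow> ('a \<Rightarrow>\<^sub>L 'a)" where
  "fwd A n 0 = id_blinfun"
| "fwd A n (Suc k) = A (n + int k) o\<^sub>L fwd A n k"

fun bwd :: "(int \<Rightarrow> ('a::real_normed_vector \<Rightarrow>\<^sub>L 'a)) \<Rightarrow> int \<Rightarrow> nat \<Rightarrow> ('a \<Rightarrow>\<^sub>L 'a)" where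
  "bwd A n 0 = id_blinfun"
| "bwd A n (Suc k) = inv_op (A (n - int k - 1)) o\<^sub>L bwd A n k"

definition cocycle :: "(int \<Rightarrow> ('a::real_normed_vector \<Rightarrow>\<^sub>L 'a)) \<Rightarrow> int \<Rightarrow> int \<Rightarrow> ('a \<Rightarrow>\<^sub>L 'a)" where
  "cocycle A m n = (if n \<le> m then fwd A n (nat (m - n)) else bwd A n (nat (n - m)))"

definition exp_dichotomy :: "(int \<Rightarrow> ('a::real_normed_vector \<Rightarrow>\<^sub>L 'a)) \<Rightarrow> bool" where
  "exp_dichotomy A \<longleftrightarrow>
     (\<exists>P :: int \<Rightarrow> ('a \<Rightarrow>\<^sub>L 'a). \<exists>C lam::real. C > 0 \<and> lam > 0 \<and>
        (\<forall>m. P m o\<^sub>L P m = P m) \<and>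
        (\<forall>m. P (m + 1) o\<^sub>L A m = A m o\<^sub>L P m) \<and>
        (\<forall>m n. m \<ge> n \<longrightarrow> norm (cocycle A m n o\<^sub>L P n) \<le> C * exp (- lam * real_of_int (m - n))) \<and>
        (\<forall>m n. m \<le> n \<longrightarrow> norm (cocycle A m n o\<^sub>L (id_blinfun - P n)) \<le> C * exp (- lam * real_of_int (n - m))))"

end

theory Submission
  imports Defs
begin

text \<open>
  The dichotomy provides a Green's function: for \<open>g\<close> in \<open>X_B\<close> the sequence
    \<open>z n = (\<Sum>k \<le> n. \<A>(n,k) P k g (k-1)) - (\<Sum>k > n. \<A>(n,k) (Id - P k) g (k-1))\<close>
  solves \<open>z (n+1) = A n (z n) + g n\<close>, and \<open>norm (z n)\<close> is dominated by \<open>C\<close> times two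
  convolutions of \<open>norm \<circ> g\<close> with the kernel \<open>j \<mapsto> exp (-\<lambda> j)\<close>. Shift invariance, the lattice
  property and completeness of \<open>B\<close> put these convolutions into \<open>B\<close>, with norm at most
  \<open>\<parallel>g\<parallel>_B / (1 - exp (-\<lambda>))\<close>. For \<open>g n = y (n+1) - A n (y n)\<close> the orbit \<open>x = y - z\<close> shadows \<open>y\<close>.

  Admissibility makes the \<open>B\<close>-norm dominate the sup norm, so two shadowing orbits differ by a
  bounded orbit. Such an orbit vanishes: its stable part is transported from arbitrarily far in the
  past, its unstable part from arbitrarily far in the future, both with exponentially small factors.
\<close>

locale admissible_seq_space =
  fixes B :: "(int \<Rightarrow> real) set" and N :: "(int \<Rightarrow> real) \<Rightarrow> real"
  assumes banach: "banach_seq_space B N" and admissible: "admissible B N"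
begin

lemma zero_mem: "(\<lambda>n. 0) \<in> B"
  and add_mem: "s \<in> B \<Longrightarrow> t \<in> B \<Longrightarrow> (\<lambda>n. s n + t n) \<in> B"
  and scale_mem: "s \<in> B \<Longrightarrow> (\<lambda>n. c * s n) \<in> B"
  and norm_nonneg: "s \<in> B \<Longrightarrow> 0 \<le> N s"
  and norm_scale: "s \<in> B \<Longrightarrow> N (\<lambda>n. c * s n) = \<bar>c\<bar> * N s"
  and norm_triangle: "s \<in> B \<Longrightarrow> t \<in> B \<Longrightarrow> N (\<lambda>n. s n + t n) \<le> N s + N t"
  and dominated_mem: "s' \<in> B \<Longrightarrow> (\<And>n. \<bar>s n\<bar> \<le> \<bar>s' n\<bar>) \<Longrightarrow> s \<in> B"
  and norm_mono: "s' \<in> B \<Longrightarrow> (\<And>n. \<bar>s n\<bar> \<le> \<bar>s' n\<bar>) \<Longrightarrow> N s \<le> N s'"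
  using banach unfolding banach_seq_space_def by blast+

lemma complete:
  assumes "\<And>k. f k \<in> B"
    and "\<And>e. e > 0 \<Longrightarrow> \<exists>M. \<forall>m\<ge>M. \<forall>k\<ge>M. N (\<lambda>n. f m n - f k n) < e"
  obtains s where "s \<in> B" "(\<lambda>k. N (\<lambda>n. f k n - s n)) \<longlonglongrightarrow> 0"
  using banach assms unfolding banach_seq_space_def by blast

lemma shift_mem: "s \<in> B \<Longrightarrow> (\<lambda>n. s (n + m)) \<in> B"
  and norm_shift: "s \<in> B \<Longrightarrow> N (\<lambda>n. s (n + m)) = N s"
  using admissible unfolding admissible_def by blast+

lemma diff_mem: "s \<in> B \<Longrightarrow> t \<in> B \<Longrightarrow> (\<lambda>n. s n - t n) \<in> B"
  using add_mem[of s "\<lambda>n. (-1) * t n"] scale_mem[of t "-1"] by simp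

lemma norm_diff_commute: "s \<in> B \<Longrightarrow> t \<in> B \<Longrightarrow> N (\<lambda>n. s n - t n) = N (\<lambda>n. t n - s n)"
  using norm_scale[OF diff_mem, of t s "-1"] by simp

lemma norm_indicator: "N (indicator {k}) = 1"
proof -
  have "indicator {0} \<in> B" "N (indicator {0}) = 1"
    using admissible unfolding admissible_def by auto
  moreover have "(\<lambda>n. indicator {0} (n + - k) :: real) = indicator {k}"
    by (auto simp: indicator_def)
  ultimately show ?thesis using norm_shift[of "indicator {0}" "-k"] by simp
qed

lemma abs_le_norm: "s \<in> B \<Longrightarrow> \<bar>s k\<bar> \<le> N s"
proof -
  assume s: "s \<in> B"
  have "indicator {k} \<in> B" using admissible unfolding admissible_def by blast
  moreover have "N (\<lambda>n. \<bar>s k\<bar> * indicator {k} n) \<le> N s"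
    by (rule norm_mono[OF s]) (auto simp: indicator_def)
  ultimately show ?thesis using norm_scale[of "indicator {k}" "\<bar>s k\<bar>"] norm_indicator by simp
qed

lemma shift_sum_mem_norm_le:
  assumes s: "s \<in> B" and "finite J"
  shows "(\<lambda>n. \<Sum>j\<in>J. c j * s (n + d j)) \<in> B \<and>
         N (\<lambda>n. \<Sum>j\<in>J. c j * s (n + d j)) \<le> (\<Sum>j\<in>J. \<bar>c j\<bar>) * N s"
  using \<open>finite J\<close>
proof (induction J rule: finite_induct)
  case empty
  then show ?case using zero_mem norm_scale[OF zero_mem, of 0] by simp
next
  case (insert i J)
  let ?t = "\<lambda>n. c i * s (n + d i)" and ?u = "\<lambda>n. \<Sum>j\<in>J. c j * s (n + d j)"
  have t: "?t \<in> B" "N ?t = \<bar>c i\<bar> * N s"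
    using scale_mem[OF shift_mem[OF s]] norm_scale[OF shift_mem[OF s]] norm_shift[OF s] by auto
  have "(\<lambda>n. \<Sum>j\<in>insert i J. c j * s (n + d j)) = (\<lambda>n. ?t n + ?u n)"
    using insert by simp
  moreover have "N (\<lambda>n. ?t n + ?u n) \<le> \<bar>c i\<bar> * N s + (\<Sum>j\<in>J. \<bar>c j\<bar>) * N s"
    using norm_triangle[OF t(1), of ?u] t(2) insert.IH by linarith
  ultimately show ?case
    using add_mem[OF t(1)] insert by (simp add: distrib_right)
qed

lemma norm_tendsto_imp_pointwise:
  assumes "\<And>k. f k \<in> B" "h \<in> B" and lim: "(\<lambda>k. N (\<lambda>n. f k n - h n)) \<longlonglongrightarrow> 0"
  shows "(\<lambda>k. f k n) \<longlonglongrightarrow> h n"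
proof -
  have "\<bar>f k n - h n\<bar> \<le> N (\<lambda>n. f k n - h n)" for k
    using abs_le_norm[OF diff_mem[OF assms(1,2)]] by simp
  then have "(\<lambda>k. f k n - h n) \<longlonglongrightarrow> 0"
    by (intro Lim_null_comparison[OF _ lim]) (simp add: always_eventually)
  then show ?thesis by (simp add: LIM_zero_iff)
qed

lemma norm_le_of_tendsto:
  assumes "\<And>k. f k \<in> B" "h \<in> B" "\<And>k. N (f k) \<le> c"
    and lim: "(\<lambda>k. N (\<lambda>n. f k n - h n)) \<longlonglongrightarrow> 0"
  shows "N h \<le> c"
proof (rule field_le_epsilon)
  fix e :: real assume "e > 0"
  then obtain k where k: "N (\<lambda>n. f k n - h n) < e"
    using LIMSEQ_D[OF lim \<open>e > 0\<close>] by (metis abs_less_iff diff_zero order_refl real_norm_def)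
  have "N h \<le> N (f k) + N (\<lambda>n. h n - f k n)"
    using norm_triangle[OF assms(1) diff_mem[OF assms(2,1)], of k k] by simp
  also have "N (\<lambda>n. h n - f k n) = N (\<lambda>n. f k n - h n)"
    using norm_diff_commute assms(1,2) by metis
  finally show "N h \<le> c + e" using k assms(3)[of k] by linarith
qed

lemma shift_series_mem_norm_le:
  assumes s: "s \<in> B" and s_nonneg: "\<And>n. 0 \<le> s n"
    and c_nonneg: "\<And>j. 0 \<le> c j" and c: "summable c"
  shows "(\<lambda>n. \<Sum>j. c j * s (n + d j)) \<in> B \<and> N (\<lambda>n. \<Sum>j. c j * s (n + d j)) \<le> (\<Sum>j. c j) * N s"
proof -
  define f where "f k = (\<lambda>n. \<Sum>j<k. c j * s (n + d j))" for k
  define h where "h = (\<lambda>n. \<Sum>j. c j * s (n + d j))"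
  have f: "f k \<in> B" "N (f k) \<le> (\<Sum>j. c j) * N s" for k
  proof -
    show "f k \<in> B" using shift_sum_mem_norm_le[OF s] unfolding f_def by blast
    have "N (f k) \<le> (\<Sum>j<k. c j) * N s"
      using shift_sum_mem_norm_le[OF s, of "{..<k}" c d] c_nonneg unfolding f_def by simp
    also have "\<dots> \<le> (\<Sum>j. c j) * N s"
      using sum_le_suminf[OF c, of "{..<k}"] c_nonneg norm_nonneg[OF s]
      by (intro mult_right_mono) auto
    finally show "N (f k) \<le> (\<Sum>j. c j) * N s" .
  qed
  have tail: "N (\<lambda>n. f m n - f k n) \<le> (\<Sum>j\<in>{k..<m}. c j) * N s" if "k \<le> m" for k m
  proof -
    have "(\<lambda>n. f m n - f k n) = (\<lambda>n. \<Sum>j\<in>{k..<m}. c j * s (n + d j))"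
      unfolding f_def using sum_diff_nat_ivl[of 0 k m] that by (auto simp: atLeast0LessThan[symmetric])
    then show ?thesis
      using shift_sum_mem_norm_le[OF s, of "{k..<m}" c d] c_nonneg by simp
  qed
  have cauchy: "\<exists>M. \<forall>m\<ge>M. \<forall>k\<ge>M. N (\<lambda>n. f m n - f k n) < e" if "e > 0" for e
  proof -
    have Ns: "0 \<le> N s" by (rule norm_nonneg[OF s])
    obtain M where M: "\<forall>k\<ge>M. \<forall>m. norm (sum c {k..<m}) < e / (N s + 1)"
      using c[unfolded summable_Cauchy] \<open>e > 0\<close> Ns by (metis add_nonneg_pos divide_pos_pos zero_less_one)
    have *: "N (\<lambda>n. f m n - f k n) < e" if "M \<le> k" "k \<le> m" for m k
    proof -
      have "sum c {k..<m} * N s \<le> e / (N s + 1) * N s"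
        using M that Ns by (intro mult_right_mono) (auto simp: abs_less_iff less_imp_le)
      also have "\<dots> < e" using \<open>e > 0\<close> Ns by (simp add: field_simps)
      finally show ?thesis using tail[OF that(2)] by linarith
    qed
    have "N (\<lambda>n. f m n - f k n) < e" if "M \<le> m" "M \<le> k" for m k
      using *[of k m] *[of m k] that norm_diff_commute[OF f(1) f(1), of m k] by (cases "k \<le> m") auto
    then show ?thesis by blast
  qed
  obtain h' where h': "h' \<in> B" "(\<lambda>k. N (\<lambda>n. f k n - h' n)) \<longlonglongrightarrow> 0"
    using complete[of f] f(1) cauchy by blast
  have "h' = h"
  proof
    fix n
    have "summable (\<lambda>j. c j * s (n + d j))"
      using abs_le_norm[OF s] s_nonneg c_nonneg
      by (intro summable_comparison_test[OF _ summable_mult2[OF c, of "N s"]])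
        (auto intro!: mult_left_mono simp: abs_mult)
    then have "(\<lambda>k. f k n) \<longlonglongrightarrow> h n"
      unfolding f_def h_def by (rule summable_LIMSEQ)
    then show "h' n = h n"
      using norm_tendsto_imp_pointwise[OF f(1) h'] LIMSEQ_unique by blast
  qed
  then show ?thesis using h' norm_le_of_tendsto[OF f(1) h'(1) f(2) h'(2)] unfolding h_def by blast
qed

end

lemma invertible_op_inv_op_apply:
  assumes "invertible_op T"
  shows "inv_op T (T v) = v" and "T (inv_op T v) = v"
proof -
  have "\<exists>S. S o\<^sub>L T = id_blinfun \<and> T o\<^sub>L S = id_blinfun"
    using assms unfolding invertible_op_def .
  from someI_ex[OF this] have "inv_op T o\<^sub>L T = id_blinfun" "T o\<^sub>L inv_op T = id_blinfun"
    unfolding inv_op_def by auto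
  then show "inv_op T (T v) = v" "T (inv_op T v) = v"
    by (metis blinfun_apply_blinfun_compose blinfun_apply_id_blinfun)+
qed

lemma cocycle_diag [simp]: "cocycle A m m = id_blinfun"
  by (simp add: cocycle_def)

lemma cocycle_Suc_left_of_le:
  assumes "n \<le> m"
  shows "cocycle A (m + 1) n v = A m (cocycle A m n v)"
proof -
  have "nat (m + 1 - n) = Suc (nat (m - n))" "n + int (nat (m - n)) = m"
    using assms by auto
  then show ?thesis using assms by (simp add: cocycle_def)
qed

lemma cocycle_eq_inv_op_of_less:
  assumes "m < n"
  shows "cocycle A m n v = inv_op (A m) (cocycle A (m + 1) n v)"
proof -
  have "nat (n - m) = Suc (nat (n - (m + 1)))" "n - int (nat (n - (m + 1))) - 1 = m"
    and "cocycle A (m + 1) n = bwd A n (nat (n - (m + 1)))"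
    using assms by (cases "n = m + 1"; auto simp: cocycle_def)+
  then show ?thesis using assms by (simp add: cocycle_def)
qed

locale invertible_system =
  fixes A :: "int \<Rightarrow> ('a::real_normed_vector \<Rightarrow>\<^sub>L 'a)"
  assumes invertible: "\<And>n. invertible_op (A n)"
begin

lemma cocycle_Suc_left: "cocycle A (m + 1) n v = A m (cocycle A m n v)"
proof (cases "n \<le> m")
  case True
  then show ?thesis by (rule cocycle_Suc_left_of_le)
next
  case False
  then show ?thesis
    using cocycle_eq_inv_op_of_less[of m n A v] invertible_op_inv_op_apply(2)[OF invertible] by simp
qed

lemma cocycle_pred_left: "cocycle A (m - 1) n v = inv_op (A (m - 1)) (cocycle A m n v)"
  using cocycle_Suc_left[of "m - 1" n v] invertible_op_inv_op_apply(1)[OF invertible] by simp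

lemma cocycle_solution:
  assumes sol: "\<And>n. x (n + 1) = A n (x n)"
  shows "cocycle A m n (x n) = x m"
proof (induction m rule: int_induct[where k = n])
  case base
  then show ?case by simp
next
  case (step1 i)
  then show ?case using sol cocycle_Suc_left by simp
next
  case (step2 i)
  then show ?case
    using cocycle_pred_left sol[of "i - 1"] invertible_op_inv_op_apply(1)[OF invertible] by simp
qed

lemma cocycle_commute:
  assumes commute: "\<And>m. P (m + 1) o\<^sub>L A m = A m o\<^sub>L P m"
  shows "P m (cocycle A m n v) = cocycle A m n (P n v)"
proof -
  have commute_apply: "P (m + 1) (A m w) = A m (P m w)" for m w
    using arg_cong[OF commute, of "\<lambda>F. F w"] by simp
  show ?thesis
  proof (induction m rule: int_induct[where k = n])
    case base
    then show ?case by simp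
  next
    case (step1 i)
    then show ?case using commute_apply cocycle_Suc_left by simp
  next
    case (step2 i)
    have "P (i - 1) (inv_op (A (i - 1)) u) = inv_op (A (i - 1)) (P i u)" for u
      using commute_apply[of "i - 1" "inv_op (A (i - 1)) u"] invertible_op_inv_op_apply[OF invertible]
      by (metis diff_add_cancel)
    with step2 show ?case using cocycle_pred_left by simp
  qed
qed

end

lemma norm_le_geometric_imp_zero:
  fixes v :: "'a::real_normed_vector"
  assumes "\<And>k::nat. norm v \<le> E * q ^ k" "0 \<le> q" "q < 1"
  shows "v = 0"
proof -
  have "(\<lambda>k. E * q ^ k) \<longlonglongrightarrow> 0"
    using LIMSEQ_power_zero[of q] assms by (intro tendsto_mult_right_zero) auto
  then have "norm v \<le> 0"
    by (rule tendsto_le[OF sequentially_bot _ tendsto_const]) (use assms(1) in auto)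
  then show ?thesis by simp
qed

lemma summable_geometric_dominated:
  fixes f :: "nat \<Rightarrow> 'a::banach"
  assumes "0 \<le> q" "q < 1" and "\<And>j. norm (f j) \<le> q ^ j * t j" and "\<And>j. t j \<le> S"
  shows "summable f"
proof (rule summable_comparison_test'[OF summable_mult[OF summable_geometric[of q], of S]])
  show "norm (f j) \<le> S * q ^ j" for j
  proof -
    have "norm (f j) \<le> q ^ j * t j" by (rule assms(3))
    also have "\<dots> \<le> q ^ j * S"
      using assms(1,4) by (intro mult_left_mono) auto
    finally show ?thesis by (simp only: mult.commute)
  qed
qed (use assms(1,2) in auto)

locale exponential_dichotomy = invertible_system A
  for A :: "int \<Rightarrow> ('a::banach \<Rightarrow>\<^sub>L 'a)" +
  fixes P :: "int \<Rightarrow> ('a \<Rightarrow>\<^sub>L 'a)" and C lam :: real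
  assumes C_pos: "0 < C" and lam_pos: "0 < lam"
    and commute: "\<And>m. P (m + 1) o\<^sub>L A m = A m o\<^sub>L P m"
    and stable: "\<And>m n. n \<le> m \<Longrightarrow> norm (cocycle A m n o\<^sub>L P n) \<le> C * exp (- lam * real_of_int (m - n))"
    and unstable: "\<And>m n. m \<le> n \<Longrightarrow>
      norm (cocycle A m n o\<^sub>L (id_blinfun - P n)) \<le> C * exp (- lam * real_of_int (n - m))"
begin

abbreviation rate :: real where "rate \<equiv> exp (- lam)"

lemma rate_nonneg: "0 \<le> rate" and rate_less_1: "rate < 1"
  using lam_pos by auto

lemma exp_rate: "exp (- (lam * real k)) = rate ^ k"
  by (simp add: exp_of_nat_mult[symmetric] mult.commute)

lemma norm_stable_le: "norm (cocycle A (n + int k) n (P n v)) \<le> C * rate ^ k * norm v"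
proof -
  have "norm (cocycle A (n + int k) n (P n v)) \<le> norm (cocycle A (n + int k) n o\<^sub>L P n) * norm v"
    using norm_blinfun[of "cocycle A (n + int k) n o\<^sub>L P n"] by simp
  also have "\<dots> \<le> C * rate ^ k * norm v"
    using stable[of n "n + int k"] by (intro mult_right_mono) (auto simp: exp_rate)
  finally show ?thesis .
qed

lemma norm_unstable_le: "norm (cocycle A n (n + int k) (v - P (n + int k) v)) \<le> C * rate ^ k * norm v"
proof -
  have "norm (cocycle A n (n + int k) (v - P (n + int k) v))
      \<le> norm (cocycle A n (n + int k) o\<^sub>L (id_blinfun - P (n + int k))) * norm v"
    using norm_blinfun[of "cocycle A n (n + int k) o\<^sub>L (id_blinfun - P (n + int k))"]
    by (simp add: blinfun.diff_left blinfun.diff_right)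
  also have "\<dots> \<le> C * rate ^ k * norm v"
    using unstable[of n "n + int k"] by (intro mult_right_mono) (auto simp: exp_rate)
  finally show ?thesis .
qed

lemma bounded_solution_eq_0:
  assumes sol: "\<And>n. w (n + 1) = A n (w n)" and bounded: "\<And>n. norm (w n) \<le> D"
  shows "w n = 0"
proof -
  have commute_apply: "P m (cocycle A m k v) = cocycle A m k (P k v)" for m k v
    using cocycle_commute[OF commute] .
  have "P n (w n) = 0"
  proof (rule norm_le_geometric_imp_zero[OF _ rate_nonneg rate_less_1])
    fix k
    have "P n (w n) = cocycle A n (n - int k) (P (n - int k) (w (n - int k)))"
      using cocycle_solution[OF sol] commute_apply by metis
    then have "norm (P n (w n)) \<le> C * rate ^ k * norm (w (n - int k))"
      using norm_stable_le[of "n - int k" k] by simp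
    also have "\<dots> \<le> C * rate ^ k * D"
      using bounded C_pos rate_nonneg by (intro mult_left_mono) auto
    finally show "norm (P n (w n)) \<le> (C * D) * rate ^ k" by (simp add: algebra_simps)
  qed
  moreover have "w n - P n (w n) = 0"
  proof (rule norm_le_geometric_imp_zero[OF _ rate_nonneg rate_less_1])
    fix k
    have "w n - P n (w n) = cocycle A n (n + int k) (w (n + int k) - P (n + int k) (w (n + int k)))"
      using cocycle_solution[OF sol] commute_apply by (metis blinfun.diff_right)
    then have "norm (w n - P n (w n)) \<le> C * rate ^ k * norm (w (n + int k))"
      using norm_unstable_le[of n k] by simp
    also have "\<dots> \<le> C * rate ^ k * D"
      using bounded C_pos rate_nonneg by (intro mult_left_mono) auto
    finally show "norm (w n - P n (w n)) \<le> (C * D) * rate ^ k" by (simp add: algebra_simps)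
  qed
  ultimately show "w n = 0" by simp
qed

text \<open>Term \<open>j\<close> of \<open>green_stable\<close> is the summand \<open>k = n - j\<close> of the Green's function above,
  term \<open>j\<close> of \<open>green_unstable\<close> the summand \<open>k = n + 1 + j\<close>.\<close>

definition green_stable :: "(int \<Rightarrow> 'a) \<Rightarrow> int \<Rightarrow> nat \<Rightarrow> 'a" where
  "green_stable g n j = cocycle A n (n - int j) (P (n - int j) (g (n - 1 - int j)))"

definition green_unstable :: "(int \<Rightarrow> 'a) \<Rightarrow> int \<Rightarrow> nat \<Rightarrow> 'a" where
  "green_unstable g n j =
     cocycle A n (n + 1 + int j) (g (n + int j) - P (n + 1 + int j) (g (n + int j)))"

definition green :: "(int \<Rightarrow> 'a) \<Rightarrow> int \<Rightarrow> 'a" where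
  "green g n = (\<Sum>j. green_stable g n j) - (\<Sum>j. green_unstable g n j)"

lemma norm_green_stable_le: "norm (green_stable g n j) \<le> C * rate ^ j * norm (g (n - 1 - int j))"
  using norm_stable_le[of "n - int j" j] unfolding green_stable_def by simp

lemma norm_green_unstable_le: "norm (green_unstable g n j) \<le> C * rate ^ j * norm (g (n + int j))"
proof -
  have "norm (green_unstable g n j) \<le> C * rate ^ Suc j * norm (g (n + int j))"
    using norm_unstable_le[of n "Suc j"] unfolding green_unstable_def by (simp add: add.assoc)
  also have "\<dots> \<le> C * rate ^ j * norm (g (n + int j))"
    using C_pos rate_nonneg rate_less_1
    by (intro mult_right_mono mult_left_mono) (auto simp: mult_left_le_one_le)
  finally show ?thesis .
qed

context
  fixes g :: "int \<Rightarrow> 'a" and S :: real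
  assumes bounded: "\<And>n. norm (g n) \<le> S"
begin

lemma summable_green_stable: "summable (green_stable g n)"
  using norm_green_stable_le bounded C_pos
  by (intro summable_geometric_dominated[OF rate_nonneg rate_less_1,
        where t = "\<lambda>j. C * norm (g (n - 1 - int j))" and S = "C * S"])
    (auto simp: algebra_simps)

lemma summable_green_unstable: "summable (green_unstable g n)"
  using norm_green_unstable_le bounded C_pos
  by (intro summable_geometric_dominated[OF rate_nonneg rate_less_1,
        where t = "\<lambda>j. C * norm (g (n + int j))" and S = "C * S"])
    (auto simp: algebra_simps)

lemma green_Suc: "green g (n + 1) = A n (green g n) + g n"
proof -
  have A_suminf: "A n (suminf f) = (\<Sum>j. A n (f j))" if "summable f" for f
    using bounded_linear.suminf[OF blinfun.bounded_linear_right[of "A n"] that] by simp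
  have "green_stable g (n + 1) (Suc j) = A n (green_stable g n j)" for j
    using cocycle_Suc_left[of n "n - int j"] unfolding green_stable_def
    by (simp add: algebra_simps)
  then have "(\<Sum>j. green_stable g (n + 1) (Suc j)) = A n (\<Sum>j. green_stable g n j)"
    using A_suminf[OF summable_green_stable] by simp
  moreover have "green_stable g (n + 1) 0 = P (n + 1) (g n)"
    unfolding green_stable_def by simp
  ultimately have stable:
    "(\<Sum>j. green_stable g (n + 1) j) = A n (\<Sum>j. green_stable g n j) + P (n + 1) (g n)"
    using suminf_split_head[OF summable_green_stable, of "n + 1"] by (simp add: algebra_simps)
  have "green_unstable g (n + 1) j = A n (green_unstable g n (Suc j))" for j
    using cocycle_Suc_left[of n "n + 1 + int (Suc j)"] unfolding green_unstable_def
    by (simp add: algebra_simps)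
  then have "(\<Sum>j. green_unstable g (n + 1) j) = A n (\<Sum>j. green_unstable g n (Suc j))"
    using A_suminf[OF summable_Suc_iff[THEN iffD2, OF summable_green_unstable]] by simp
  also have "\<dots> = A n (\<Sum>j. green_unstable g n j) - A n (green_unstable g n 0)"
    using suminf_split_head[OF summable_green_unstable] by (simp add: blinfun.diff_right)
  also have "A n (green_unstable g n 0) = g n - P (n + 1) (g n)"
    using cocycle_Suc_left[of n "n + 1"] unfolding green_unstable_def by simp
  finally have unstable:
    "(\<Sum>j. green_unstable g (n + 1) j) = A n (\<Sum>j. green_unstable g n j) - (g n - P (n + 1) (g n))" .
  show ?thesis
    unfolding green_def stable unstable by (simp add: blinfun.diff_right algebra_simps)
qed

lemma norm_green_le:
  "norm (green g n) \<le> C * (\<Sum>j. rate ^ j * norm (g (n + (- 1 - int j))))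
                     + C * (\<Sum>j. rate ^ j * norm (g (n + int j)))"
proof -
  have summable: "summable (\<lambda>j. rate ^ j * norm (g (n + d j)))" for d
    by (rule summable_geometric_dominated[OF rate_nonneg rate_less_1, where S = S])
      (use bounded rate_nonneg in auto)
  have "norm (\<Sum>j. green_stable g n j) \<le> (\<Sum>j. C * (rate ^ j * norm (g (n + (- 1 - int j)))))"
    using norm_green_stable_le summable_mult[OF summable[of "\<lambda>j. - 1 - int j"], of C]
    by (intro norm_suminf_le) (auto simp: algebra_simps)
  moreover have "norm (\<Sum>j. green_unstable g n j) \<le> (\<Sum>j. C * (rate ^ j * norm (g (n + int j))))"
    using norm_green_unstable_le summable_mult[OF summable[of int], of C]
    by (intro norm_suminf_le) (auto simp: algebra_simps)
  ultimately show ?thesis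
    unfolding green_def suminf_mult[OF summable]
    using norm_triangle_ineq4[of "\<Sum>j. green_stable g n j" "\<Sum>j. green_unstable g n j"] by linarith
qed

end

lemma green_in_XB:
  assumes "admissible_seq_space B N" and g: "in_XB B g"
  shows "in_XB B (green g) \<and> norm_XB N (green g) \<le> 2 * C / (1 - rate) * norm_XB N g"
proof -
  interpret admissible_seq_space B N by fact
  define s where "s n = norm (g n)" for n
  have s: "s \<in> B" using g unfolding s_def in_XB_def .
  have geometric: "summable (\<lambda>j. rate ^ j)" "(\<Sum>j. rate ^ j) = 1 / (1 - rate)"
    using rate_nonneg rate_less_1 by (auto intro: summable_geometric simp: suminf_geometric)
  define h where "h d n = (\<Sum>j. rate ^ j * s (n + d j))" for d n
  have h: "h d \<in> B" "N (h d) \<le> 1 / (1 - rate) * N s" for d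
    using shift_series_mem_norm_le[OF s _ _ geometric(1), of d] rate_nonneg geometric(2)
    unfolding h_def s_def by auto
  define u where "u n = C * h (\<lambda>j. - 1 - int j) n + C * h int n" for n
  have u: "u \<in> B" unfolding u_def using add_mem scale_mem h(1) by blast
  have "N u \<le> N (\<lambda>n. C * h (\<lambda>j. - 1 - int j) n) + N (\<lambda>n. C * h int n)"
    unfolding u_def using norm_triangle scale_mem h(1) by blast
  also have "\<dots> \<le> C * (1 / (1 - rate) * N s) + C * (1 / (1 - rate) * N s)"
    using norm_scale[OF h(1)] mult_left_mono[OF h(2) less_imp_le[OF C_pos]] C_pos
    by (intro add_mono) simp_all
  finally have Nu: "N u \<le> 2 * C / (1 - rate) * N s" by simp
  have "norm (green g n) \<le> u n" for n
    using norm_green_le[where g = g and S = "N s"] abs_le_norm[OF s] unfolding u_def h_def s_def by auto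
  then have dominated: "\<bar>norm (green g n)\<bar> \<le> \<bar>u n\<bar>" for n
    by (metis abs_norm_cancel abs_ge_self order_trans)
  show ?thesis
    using dominated_mem[OF u dominated] norm_mono[OF u dominated] Nu
    unfolding in_XB_def norm_XB_def s_def by auto
qed

lemma XB_close_solution_exists:
  assumes "admissible_seq_space B N" and y: "in_XB B (\<lambda>n. y (n + 1) - A n (y n))"
  shows "\<exists>x. (\<forall>n. x (n + 1) = A n (x n)) \<and> in_XB B (\<lambda>n. x n - y n) \<and>
           norm_XB N (\<lambda>n. x n - y n) \<le> 2 * C / (1 - rate) * norm_XB N (\<lambda>n. y (n + 1) - A n (y n))"
proof -
  interpret admissible_seq_space B N by fact
  define g where "g = (\<lambda>n. y (n + 1) - A n (y n))"
  have g: "in_XB B g" using y unfolding g_def .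
  have "norm (g n) \<le> norm_XB N g" for n
    using abs_le_norm[of "\<lambda>n. norm (g n)" n] g unfolding in_XB_def norm_XB_def by simp
  then have "green g (n + 1) = A n (green g n) + g n" for n
    by (rule green_Suc)
  then have "y (n + 1) - green g (n + 1) = A n (y n - green g n)" for n
    by (simp add: g_def blinfun.diff_right)
  moreover have "(\<lambda>n. norm ((y n - green g n) - y n)) = (\<lambda>n. norm (green g n))"
    by simp
  ultimately show ?thesis
    using green_in_XB[OF assms(1) g] unfolding g_def[symmetric] in_XB_def norm_XB_def
    by (intro exI[of _ "\<lambda>n. y n - green g n"]) simp
qed

lemma XB_close_solutions_eq:
  assumes "admissible_seq_space B N"
    and x: "\<And>n. x (n + 1) = A n (x n)" "in_XB B (\<lambda>n. x n - y n)"
    and x': "\<And>n. x' (n + 1) = A n (x' n)" "in_XB B (\<lambda>n. x' n - y n)"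
  shows "x = x'"
proof
  interpret admissible_seq_space B N by fact
  fix n
  have "norm (x n - x' n) \<le> norm_XB N (\<lambda>n. x n - y n) + norm_XB N (\<lambda>n. x' n - y n)" for n
    using norm_triangle_ineq4[of "x n - y n" "x' n - y n"]
      abs_le_norm[of "\<lambda>n. norm (x n - y n)" n] abs_le_norm[of "\<lambda>n. norm (x' n - y n)" n] x(2) x'(2)
    unfolding in_XB_def norm_XB_def by simp
  moreover have "x (n + 1) - x' (n + 1) = A n (x n - x' n)" for n
    using x(1) x'(1) by (simp add: blinfun.diff_right)
  ultimately have "x n - x' n = 0"
    by (rule bounded_solution_eq_0[where w = "\<lambda>n. x n - x' n", rotated])
  then show "x n = x' n" by simp
qed

end

theorem corollary3p7:
  fixes A :: "int \<Rightarrow> ('a::banach \<Rightarrow>\<^sub>L 'a)"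
    and B :: "(int \<Rightarrow> real) set" and N :: "(int \<Rightarrow> real) \<Rightarrow> real"
  assumes "banach_seq_space B N" and "admissible B N"
    and "\<forall>n. invertible_op (A n)"
    and "\<exists>M. \<forall>n. norm (A n) \<le> M"
    and "exp_dichotomy A"
  shows "\<exists>L>0. \<forall>\<epsilon>>0. \<forall>y :: int \<Rightarrow> 'a.
           in_XB B (\<lambda>n. y (n + 1) - A n (y n)) \<and>
           norm_XB N (\<lambda>n. y (n + 1) - A n (y n)) \<le> L * \<epsilon> \<longrightarrow>
           (\<exists>x :: int \<Rightarrow> 'a. (\<forall>n. x (n + 1) = A n (x n)) \<and>
               in_XB B (\<lambda>n. x n - y n) \<and> norm_XB N (\<lambda>n. x n - y n) \<le> \<epsilon>) \<and>
           (\<forall>x x' :: int \<Rightarrow> 'a.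
               (\<forall>n. x (n + 1) = A n (x n)) \<and> in_XB B (\<lambda>n. x n - y n) \<and> norm_XB N (\<lambda>n. x n - y n) \<le> \<epsilon> \<and>
               (\<forall>n. x' (n + 1) = A n (x' n)) \<and> in_XB B (\<lambda>n. x' n - y n) \<and> norm_XB N (\<lambda>n. x' n - y n) \<le> \<epsilon>
               \<longrightarrow> x = x')"
proof -
  obtain P C lam where "exponential_dichotomy A P C lam"
    using assms(3,5)
    unfolding exp_dichotomy_def exponential_dichotomy_def exponential_dichotomy_axioms_def
      invertible_system_def
    by auto
  then interpret exponential_dichotomy A P C lam .
  have XB: "admissible_seq_space B N"
    using assms(1,2) by (rule admissible_seq_space.intro)
  define L where "L = (1 - rate) / (2 * C)"
  have L: "0 < L" "2 * C / (1 - rate) * (L * \<epsilon>) = \<epsilon>" for \<epsilon>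
    using C_pos rate_less_1 unfolding L_def by auto
  show ?thesis
  proof (intro exI[of _ L] conjI allI impI)
    fix \<epsilon> :: real and y :: "int \<Rightarrow> 'a"
    assume y: "in_XB B (\<lambda>n. y (n + 1) - A n (y n)) \<and> norm_XB N (\<lambda>n. y (n + 1) - A n (y n)) \<le> L * \<epsilon>"
    then obtain x where "\<forall>n. x (n + 1) = A n (x n)" "in_XB B (\<lambda>n. x n - y n)"
      and "norm_XB N (\<lambda>n. x n - y n) \<le> 2 * C / (1 - rate) * norm_XB N (\<lambda>n. y (n + 1) - A n (y n))"
      using XB_close_solution_exists[OF XB] by blast
    moreover have "2 * C / (1 - rate) * norm_XB N (\<lambda>n. y (n + 1) - A n (y n)) \<le> \<epsilon>"
      using y mult_left_mono[of _ "L * \<epsilon>" "2 * C / (1 - rate)"] C_pos rate_less_1 L(2) by auto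
    ultimately show "\<exists>x. (\<forall>n. x (n + 1) = A n (x n)) \<and> in_XB B (\<lambda>n. x n - y n) \<and>
        norm_XB N (\<lambda>n. x n - y n) \<le> \<epsilon>"
      by force
  qed (use L XB_close_solutions_eq[OF XB] in auto)
qed

end
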